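(* For all real $z$ with $0<|z|\le 1$, \[ \sum_{k=1}^\infty\frac{\zeta(2k)z^{2k}}{(k+1)(2k+1)} = \frac12-\frac{\zeta(3)}{2\pi^2z^2}+\frac{\operatorname{Cl}_3(2\pi z)}{2\pi^2z^2}+\frac{\operatorname{Cl}_2(2\pi z)}{2\pi z}. \]
   Context: $\zeta$ is the Riemann zeta function. $\operatorname{Cl}_2(x)=\sum_{k\ge1}\sin(kx)/k^2$ and $\operatorname{Cl}_3(x)=\sum_{k\ge1}\cos(kx)/k^3$ are Clausen functions. *)

theory Defs
  imports "HOL-Analysis.Analysis"
begin

text \<open>Riemann zeta function on the real half-line s > 1 via its Dirichlet series
  (only the values at s = 3 and s = 2k, k >= 1, are needed).\<close>
definition zeta :: "real \<Rightarrow> real" where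
  "zeta s = (\<Sum>n. 1 / (real (Suc n)) powr s)"

definition Cl2 :: "real \<Rightarrow> real" where
  "Cl2 x = (\<Sum>k. sin (real (Suc k) * x) / (real (Suc k))^2)"

definition Cl3 :: "real \<Rightarrow> real" where
  "Cl3 x = (\<Sum>k. cos (real (Suc k) * x) / (real (Suc k))^3)"

end

theory Submission
  imports Defs "HOL-Complex_Analysis.Complex_Analysis" "HOL-Real_Asymp.Real_Asymp"
begin

(*
  Write F(x) and G(x) for x^2 times the two sides of the identity. Inserting
  zeta(2k) = sum_n n^(-2k) and summing over k first gives
  F''(x) = 2 sum_n x^2 / (n^2 - x^2) = 1 - pi x cot(pi x), the partial fraction expansion of
  the cotangent, obtained as the logarithmic derivative of the sine product.
  On (0,1), G(x) is the real part at s = x of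
    s^2/2 - zeta(3)/(2 pi^2) + Li3(e(s))/(2 pi^2) - i s Li2(e(s))/(2 pi),   e(s) = exp(2 pi i s),
  where Li2 and Li3 are the polylogarithms continued holomorphically to C minus [1, oo);
  its second derivative 1 + 2 pi i s e(s)/(1 - e(s)) also has real part 1 - pi x cot(pi x)
  on (0,1). Since F, F', G and G' all tend to 0 as x -> 0+, F = G on (0,1], and the identity
  follows after dividing by z^2, both sides being even in z.
*)

section \<open>Series, limits and derivatives\<close>

lemma continuous_on_suminf_Weierstrass:
  fixes f :: "nat \<Rightarrow> 'a::topological_space \<Rightarrow> 'b::banach"
  assumes "summable M" "\<And>n x. x \<in> S \<Longrightarrow> norm (f n x) \<le> M n" "\<And>n. continuous_on S (f n)"
  shows "continuous_on S (\<lambda>x. \<Sum>n. f n x)"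
  using Weierstrass_m_test[OF assms(2,1)]
  by (rule uniform_limit_theorem[rotated]) (auto intro!: always_eventually continuous_on_sum assms(3))

lemma has_field_derivative_series_Weierstrass:
  fixes f f' :: "nat \<Rightarrow> 'a::{real_normed_field,banach} \<Rightarrow> 'a"
  assumes "open S" "convex S" "x \<in> S"
    and "\<And>n y. y \<in> S \<Longrightarrow> (f n has_field_derivative f' n y) (at y)"
    and "\<And>n y. y \<in> S \<Longrightarrow> norm (f' n y) \<le> M n" "summable M"
    and "a \<in> S" "summable (\<lambda>n. f n a)"
  shows "((\<lambda>y. \<Sum>n. f n y) has_field_derivative (\<Sum>n. f' n x)) (at x)"
proof -
  have "uniformly_convergent_on S (\<lambda>n y. \<Sum>i<n. f' i y)"
    using assms(5,6) by (rule Weierstrass_m_test')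
  then show ?thesis
    using has_field_derivative_series'(2)[of S f f' a x] assms
    by (auto simp: has_field_derivative_at_within interior_open)
qed

lemma has_real_derivative_series_unit_interval:
  fixes f f' :: "nat \<Rightarrow> real \<Rightarrow> real"
  assumes x: "\<bar>x\<bar> < 1"
    and f': "\<And>k y. (f k has_real_derivative f' k y) (at y)"
    and bound: "\<And>k y. \<bar>y\<bar> < 1 \<Longrightarrow> \<bar>f' k y\<bar> \<le> B * \<bar>y\<bar> ^ k"
    and f0: "\<And>k. f k 0 = 0"
  shows "((\<lambda>y. \<Sum>k. f k y) has_real_derivative (\<Sum>k. f' k x)) (at x)"
proof -
  define r where "r = (1 + \<bar>x\<bar>) / 2"
  have r: "\<bar>x\<bar> < r" "r < 1" using x by (auto simp: r_def)
  have "\<bar>f' 0 0\<bar> \<le> B" using bound[of 0 0] by simp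
  then have "0 \<le> B" by linarith
  have M: "norm (f' k y) \<le> B * r ^ k" if "y \<in> {-r<..<r}" for k y
  proof -
    have "\<bar>f' k y\<bar> \<le> B * \<bar>y\<bar> ^ k" using that r by (intro bound) auto
    also have "\<dots> \<le> B * r ^ k"
      using that \<open>0 \<le> B\<close> by (intro mult_left_mono power_mono) auto
    finally show ?thesis by simp
  qed
  have "summable (\<lambda>k. B * r ^ k)"
    using r by (intro summable_mult summable_geometric) auto
  moreover have "x \<in> {-r<..<r}" "0 \<in> {-r<..<r}" using r by auto
  ultimately show ?thesis
    using has_field_derivative_series_Weierstrass[where S="{-r<..<r}" and a=0, OF _ _ _ f' M]
    by (simp add: f0)
qed

lemma sums_swap_nonneg:
  fixes c :: "nat \<Rightarrow> nat \<Rightarrow> real"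
  assumes nonneg: "\<And>n k. 0 \<le> c n k"
    and rows: "\<And>n. (\<lambda>k. c n k) sums r n" and cols: "\<And>k. (\<lambda>n. c n k) sums s k"
    and "summable r"
  shows "s sums (\<Sum>n. r n)"
proof -
  define C where "C = (\<lambda>(n, k). c n k)"
  have row_has_sum: "((\<lambda>k. C (n, k)) has_sum r n) UNIV" for n
    unfolding C_def using rows nonneg by (simp add: sums_nonneg_imp_has_sum)
  have "0 \<le> r n" for n
    using rows[of n] nonneg by (metis sums_iff suminf_nonneg)
  then have r_has_sum: "(r has_sum (\<Sum>n. r n)) UNIV"
    using \<open>summable r\<close> by (intro sums_nonneg_imp_has_sum) (auto simp: summable_sums)
  have "C summable_on UNIV \<times> UNIV"
    by (rule summable_on_SigmaI[OF row_has_sum has_sum_imp_summable[OF r_has_sum]])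
      (simp add: C_def nonneg)
  then have "(C has_sum (\<Sum>n. r n)) (UNIV \<times> UNIV)"
    by (rule has_sum_SigmaI[OF row_has_sum r_has_sum])
  then have "((\<lambda>(k, n). C (n, k)) has_sum (\<Sum>n. r n)) (UNIV \<times> UNIV)"
    by (subst (asm) has_sum_swap) simp
  moreover have "((\<lambda>n. (\<lambda>(k, n). C (n, k)) (k, n)) has_sum s k) UNIV" for k
    unfolding C_def using cols nonneg by (simp add: sums_nonneg_imp_has_sum)
  ultimately have "(s has_sum (\<Sum>n. r n)) UNIV"
    by (rule has_sum_Sigma')
  then show ?thesis by (rule has_sum_imp_sums)
qed

lemma eq_at_closure_point:
  fixes f g :: "'a::t2_space \<Rightarrow> 'b::t2_space"
  assumes "\<And>w. w \<in> S \<Longrightarrow> f w = g w" "continuous (at u within S) f" "continuous (at u within S) g"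
    and "u \<in> closure S"
  shows "f u = g u"
proof (cases "u \<in> S")
  case False
  with assms(4) have "\<not> trivial_limit (at u within S)"
    by (simp add: trivial_limit_within closure_def)
  moreover have "(g \<longlongrightarrow> f u) (at u within S)"
    using assms(2) unfolding continuous_within
    by (rule Lim_transform_eventually) (auto simp: eventually_at_filter assms(1))
  ultimately show ?thesis
    using assms(3) tendsto_unique unfolding continuous_within by blast
qed (use assms(1) in simp)

lemma has_real_derivative_zero_imp_eq_at_right_limit:
  fixes f :: "real \<Rightarrow> real"
  assumes "\<And>x. x \<in> {a<..<b} \<Longrightarrow> (f has_real_derivative 0) (at x)"
    and "(f \<longlongrightarrow> l) (at_right a)" "x \<in> {a<..<b}"
  shows "f x = l"
proof -
  obtain c where c: "\<And>y. y \<in> {a<..<b} \<Longrightarrow> f y = c"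
    using has_field_derivative_zero_constant[of "{a<..<b}" f] assms(1)
    by (auto simp: has_field_derivative_at_within)
  have "a < b" using assms(3) by simp
  then have "\<forall>\<^sub>F y in at_right a. f y = c"
    by (rule eventually_mono[OF eventually_at_right_real]) (use c in auto)
  then have "(f \<longlongrightarrow> c) (at_right a)" by (rule tendsto_eventually)
  with assms(2) \<open>a < b\<close> have "c = l" using tendsto_unique by (metis trivial_limit_at_right_real)
  with c assms(3) show ?thesis by simp
qed

lemma has_real_derivative_Re_of_real:
  assumes "(f has_field_derivative D) (at (of_real x))"
  shows "((\<lambda>x. Re (f (of_real x))) has_real_derivative Re D) (at x)"
proof -
  have "((\<lambda>x. f (of_real x)) has_derivative (\<lambda>h. h *\<^sub>R D)) (at x)"
    using has_vector_derivative_real_field[OF assms] by (simp add: has_vector_derivative_def)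
  then have "((\<lambda>x. Re (f (of_real x))) has_derivative (\<lambda>h. Re (h *\<^sub>R D))) (at x)"
    by (rule has_derivative_Re)
  then show ?thesis by (simp add: has_field_derivative_def mult.commute[of _ "Re D"])
qed

lemma has_real_derivative_monomial:
  "((\<lambda>y. c * y ^ Suc n) has_real_derivative c * real (Suc n) * y ^ n) (at y)"
  using DERIV_cmult[OF DERIV_pow[of "Suc n" y UNIV], of c] by (simp add: mult.assoc)

lemma has_real_derivative_ln_one_minus_square_div:
  fixes y N :: real
  assumes "y\<^sup>2 < N"
  shows "((\<lambda>y. ln (1 - y\<^sup>2 / N)) has_real_derivative - 2 * y / (N - y\<^sup>2)) (at y)"
proof -
  have "0 < N" using assms zero_le_power2[of y] by linarith
  have "((\<lambda>y. 1 - y\<^sup>2 / N) has_real_derivative 0 - real 2 * y ^ (2 - Suc 0) / N) (at y)"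
    by (intro DERIV_diff DERIV_const DERIV_cdivide DERIV_pow)
  then have "((\<lambda>y. 1 - y\<^sup>2 / N) has_real_derivative - (2 * y / N)) (at y)" by simp
  moreover have "0 < 1 - y\<^sup>2 / N" using assms \<open>0 < N\<close> by (simp add: field_simps)
  ultimately have "((\<lambda>y. ln (1 - y\<^sup>2 / N)) has_real_derivative
                     inverse (1 - y\<^sup>2 / N) * - (2 * y / N)) (at y)"
    by (intro DERIV_chain2[OF DERIV_ln])
  moreover have "inverse (1 - y\<^sup>2 / N) * - (2 * y / N) = - 2 * y / (N - y\<^sup>2)"
    using assms \<open>0 < N\<close> by (simp add: field_simps)
  ultimately show ?thesis by simp
qed

lemma summable_inverse_Suc_square: "summable (\<lambda>n. 1 / real (Suc n) ^ 2)"
proof -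
  have "summable (\<lambda>n. 1 / real n ^ 2)"
    using inverse_power_summable[of 2, where 'a=real] by (simp add: inverse_eq_divide)
  then show ?thesis by (simp only: summable_Suc_iff[of "\<lambda>n. 1 / real n ^ 2"])
qed

lemma inverse_Suc_power_le_square: "2 \<le> m \<Longrightarrow> 1 / real (Suc n) ^ m \<le> 1 / real (Suc n) ^ 2"
  by (intro divide_left_mono power_increasing) (auto simp del: of_nat_Suc)

lemma Suc_square_minus_square_lower_bound:
  fixes x :: real
  assumes "x\<^sup>2 \<le> r\<^sup>2"
  shows "(1 - r\<^sup>2) * real (Suc n) ^ 2 \<le> real (Suc n) ^ 2 - x\<^sup>2"
proof -
  have "r\<^sup>2 * 1 \<le> r\<^sup>2 * real (Suc n) ^ 2"
    by (intro mult_left_mono) (auto simp del: of_nat_Suc)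
  with assms show ?thesis by (simp add: algebra_simps)
qed

section \<open>Polylogarithms on the slit plane\<close>

definition slit_plane :: "complex set" where
  "slit_plane = {w. Im w \<noteq> 0 \<or> Re w < 1}"

lemma open_slit_plane: "open slit_plane"
proof -
  have "slit_plane = {w. Im w < 0} \<union> {w. Im w > 0} \<union> {w. Re w < 1}"
    by (auto simp: slit_plane_def)
  then show ?thesis
    by (metis open_Un open_halfspace_Im_lt open_halfspace_Im_gt open_halfspace_Re_lt)
qed

lemma starlike_slit_plane: "starlike slit_plane"
  unfolding starlike_def
proof (intro bexI[of _ 0] ballI subsetI)
  fix w y assume w: "w \<in> slit_plane" and "y \<in> closed_segment 0 w"
  then obtain u where u: "0 \<le> u" "u \<le> 1" "y = u *\<^sub>R w" by (auto simp: closed_segment_def)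
  have "u * Re w < 1" if "Re w < 1"
    using u that by (smt (verit) mult_left_le_one_le mult_nonneg_nonpos)
  with w u show "y \<in> slit_plane" by (auto simp: slit_plane_def)
qed (simp add: slit_plane_def)

lemma closed_unit_disc_in_slit_plane: "norm w \<le> 1 \<Longrightarrow> w \<noteq> 1 \<Longrightarrow> w \<in> slit_plane"
  using complex_Re_le_cmod[of w] by (auto simp: slit_plane_def complex_eq_iff)

lemma one_minus_slit_plane_notin_nonpos_Reals: "w \<in> slit_plane \<Longrightarrow> 1 - w \<notin> \<real>\<^sub>\<le>\<^sub>0"
  by (auto simp: slit_plane_def complex_nonpos_Reals_iff)

lemma divided_primitive_exists:
  fixes f :: "complex \<Rightarrow> complex"
  assumes S: "open S" "starlike S" "0 \<in> S" and holf: "f holomorphic_on S" and f0: "f 0 = 0"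
  shows "\<exists>L. (\<forall>w\<in>S. (L has_field_derivative (if w = 0 then deriv f 0 else f w / w)) (at w)) \<and> L 0 = 0"
proof -
  define g where "g w = (if w = 0 then deriv f 0 else f w / w)" for w
  have "g holomorphic_on S"
    using pole_lemma[OF holf, of 0] S unfolding f0 diff_zero g_def[abs_def]
    by (simp add: interior_open)
  then obtain L where L: "\<And>w. w \<in> S \<Longrightarrow> (L has_field_derivative g w) (at w)"
    using holomorphic_starlike_primitive[of S g "{}"] S
    by (metis Diff_empty finite.emptyI holomorphic_on_imp_continuous_on
        holomorphic_on_imp_differentiable_at)
  show ?thesis
    by (rule exI[of _ "\<lambda>w. L w - L 0"]) (auto intro!: derivative_eq_intros L simp: g_def)
qed

(*
  The polylogarithms are continued beyond the unit disc by Li_(m+1) = slit_primitive Li_m,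
  the primitive of Li_m(w)/w vanishing at 0, starting from Li_1(w) = - Ln (1 - w).
*)
definition slit_primitive :: "(complex \<Rightarrow> complex) \<Rightarrow> complex \<Rightarrow> complex" where
  "slit_primitive f = (SOME L. (\<forall>w\<in>slit_plane.
     (L has_field_derivative (if w = 0 then deriv f 0 else f w / w)) (at w)) \<and> L 0 = 0)"

lemma
  assumes "f holomorphic_on slit_plane" "f 0 = 0"
  shows slit_primitive_has_field_derivative: "w \<in> slit_plane \<Longrightarrow>
      (slit_primitive f has_field_derivative (if w = 0 then deriv f 0 else f w / w)) (at w)"
    and slit_primitive_0: "slit_primitive f 0 = 0"
proof -
  have "\<exists>L. (\<forall>w\<in>slit_plane.
      (L has_field_derivative (if w = 0 then deriv f 0 else f w / w)) (at w)) \<and> L 0 = 0"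
    using divided_primitive_exists[OF open_slit_plane starlike_slit_plane _ assms]
    by (simp add: slit_plane_def)
  from someI_ex[OF this] show "w \<in> slit_plane \<Longrightarrow>
      (slit_primitive f has_field_derivative (if w = 0 then deriv f 0 else f w / w)) (at w)"
    and "slit_primitive f 0 = 0"
    unfolding slit_primitive_def by blast+
qed

definition polylog_series :: "nat \<Rightarrow> complex \<Rightarrow> complex" where
  "polylog_series m w = (\<Sum>n. w ^ Suc n / of_nat (Suc n) ^ m)"

lemma polylog_series_0 [simp]: "polylog_series m 0 = 0"
  by (simp add: polylog_series_def)

lemma norm_power_div_Suc_power_le: "norm (w ^ n / of_nat (Suc n) ^ m :: complex) \<le> norm w ^ n"
  by (simp add: norm_divide norm_power divide_le_eq mult_le_cancel_left1 del: of_nat_Suc)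

lemma norm_polylog_term_le:
  assumes "norm w \<le> 1" "2 \<le> k"
  shows "norm (w ^ j / of_nat (Suc n) ^ k :: complex) \<le> 1 / real (Suc n) ^ 2"
proof -
  have "norm (w ^ j / of_nat (Suc n) ^ k) = norm w ^ j / real (Suc n) ^ k"
    by (simp add: norm_divide norm_power del: of_nat_Suc)
  also have "\<dots> \<le> 1 / real (Suc n) ^ k"
    using assms(1) by (intro divide_right_mono power_le_one) auto
  also have "\<dots> \<le> 1 / real (Suc n) ^ 2"
    using assms(2) by (rule inverse_Suc_power_le_square)
  finally show ?thesis .
qed

lemma summable_polylog_series:
  fixes w :: complex
  shows "norm w \<le> 1 \<Longrightarrow> 2 \<le> m \<Longrightarrow> summable (\<lambda>n. w ^ Suc n / of_nat (Suc n) ^ m)"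
  by (rule summable_comparison_test'[OF summable_inverse_Suc_square, where N=0])
    (rule norm_polylog_term_le)

lemma polylog_series_eq_mult:
  assumes "norm w < 1"
  shows "polylog_series m w = w * (\<Sum>n. w ^ n / of_nat (Suc n) ^ m)"
proof -
  have "summable (\<lambda>n. w ^ n / of_nat (Suc n) ^ m)"
    using assms by (intro summable_comparison_test'[OF summable_geometric norm_power_div_Suc_power_le])
      auto
  then show ?thesis
    unfolding polylog_series_def by (subst suminf_mult[symmetric]) (simp_all add: mult_ac)
qed

lemma polylog_series_has_field_derivative:
  assumes "norm w < 1"
  shows "(polylog_series (Suc m) has_field_derivative
           (if w = 0 then 1 else polylog_series m w / w)) (at w)"
proof -
  define r where "r = (1 + norm w) / 2"
  have r: "norm w < r" "r < 1" "0 < r" using assms by (auto simp: r_def add_pos_nonneg)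
  have termwise: "((\<lambda>v. \<Sum>n. v ^ Suc n / of_nat (Suc n) ^ Suc m) has_field_derivative
          (\<Sum>n. w ^ n / of_nat (Suc n) ^ m)) (at w)"
  proof (rule has_field_derivative_series_Weierstrass[of "ball 0 r" _ _ _ "\<lambda>n. r ^ n" 0])
    show "((\<lambda>v. v ^ Suc n / of_nat (Suc n) ^ Suc m) has_field_derivative
            v ^ n / of_nat (Suc n) ^ m) (at v)" for n and v :: complex
    proof -
      have "((\<lambda>v. v ^ Suc n) has_field_derivative of_nat (Suc n) * v ^ n) (at v)"
        by (rule DERIV_cong[OF DERIV_power_Suc[OF DERIV_ident]]) simp
      then have "((\<lambda>v. v ^ Suc n / of_nat (Suc n) ^ Suc m) has_field_derivative
                   of_nat (Suc n) * v ^ n / of_nat (Suc n) ^ Suc m) (at v)"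
        by (rule DERIV_cdivide)
      then show ?thesis by (simp del: of_nat_Suc)
    qed
    show "norm (v ^ n / of_nat (Suc n) ^ m) \<le> r ^ n" if "v \<in> ball 0 r" for n and v :: complex
      using that norm_power_div_Suc_power_le[of v n m] power_mono[of "norm v" r n]
      by auto
    show "summable (\<lambda>n. r ^ n)" using r by (intro summable_geometric) simp
  qed (use r in auto)
  have "(\<Sum>n. (0::complex) ^ n / of_nat (Suc n) ^ m) = 1"
    by (subst suminf_finite[of "{0}"]) auto
  then have "(\<Sum>n. w ^ n / of_nat (Suc n) ^ m) = (if w = 0 then 1 else polylog_series m w / w)"
    using polylog_series_eq_mult[OF assms, of m] by auto
  with termwise show ?thesis by (simp add: polylog_series_def[abs_def])
qed

lemma continuous_on_polylog_series: "continuous_on (cball 0 1) (polylog_series (Suc (Suc m)))"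
  unfolding polylog_series_def[abs_def]
proof (rule continuous_on_suminf_Weierstrass[OF summable_inverse_Suc_square])
  show "norm (w ^ Suc n / of_nat (Suc n) ^ Suc (Suc m)) \<le> 1 / real (Suc n) ^ 2"
    if "w \<in> cball 0 1" for n and w :: complex
    using that by (intro norm_polylog_term_le) auto
qed (auto intro!: continuous_intros simp del: of_nat_Suc)

lemma polylog_series_1:
  assumes "norm w < 1"
  shows "polylog_series 1 w = - Ln (1 - w)"
proof -
  have "(\<lambda>n. - (w ^ n) / of_nat n) sums Ln (1 - w)"
    using Ln_series'[of "- w"] assms by simp
  then have "(\<lambda>n. - (w ^ Suc n) / of_nat (Suc n)) sums Ln (1 - w)"
    by (subst sums_Suc_iff) simp
  from sums_minus[OF this] show ?thesis
    by (simp add: polylog_series_def sums_iff del: of_nat_Suc)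
qed

lemma slit_primitive_eq_polylog_series_disc:
  assumes holf: "f holomorphic_on slit_plane" and f0: "f 0 = 0"
    and f_disc: "\<And>v. norm v < 1 \<Longrightarrow> f v = polylog_series (Suc m) v"
    and w: "norm w < 1"
  shows "slit_primitive f w = polylog_series (Suc (Suc m)) w"
proof -
  let ?L = "slit_primitive f" and ?P = "polylog_series (Suc (Suc m))"
  have "(f has_field_derivative 1) (at 0)"
    using polylog_series_has_field_derivative[of 0 m, simplified]
    by (rule has_field_derivative_transform_within_open[of _ _ _ "ball 0 1"]) (auto simp: f_disc)
  then have f'0: "deriv f 0 = 1" by (rule DERIV_imp_deriv)
  have deriv_diff: "((\<lambda>v. ?L v - ?P v) has_field_derivative 0) (at v within ball 0 1)"
    if v: "v \<in> ball 0 1" for v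
  proof -
    define d where "d = (if v = 0 then 1 else polylog_series (Suc m) v / v)"
    have "v \<in> slit_plane" using v by (intro closed_unit_disc_in_slit_plane) auto
    then have "(?L has_field_derivative (if v = 0 then deriv f 0 else f v / v)) (at v)"
      by (rule slit_primitive_has_field_derivative[OF holf f0])
    moreover have "(if v = 0 then deriv f 0 else f v / v) = d"
      using v f'0 by (simp add: d_def f_disc)
    ultimately have L': "(?L has_field_derivative d) (at v)" by (simp only:)
    have P': "(?P has_field_derivative d) (at v)"
      using polylog_series_has_field_derivative[of v "Suc m"] v by (simp add: d_def)
    from DERIV_diff[OF L' P'] show ?thesis by (simp add: has_field_derivative_at_within)
  qed
  from has_field_derivative_zero_constant[OF convex_ball deriv_diff]
  obtain c where c: "\<And>v. v \<in> ball 0 1 \<Longrightarrow> ?L v - ?P v = c" by blast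
  from c[of 0] have "c = 0" by (simp add: slit_primitive_0[OF holf f0])
  with c[of w] w show ?thesis by simp
qed

lemma slit_primitive_eq_polylog_series:
  assumes holf: "f holomorphic_on slit_plane" and f0: "f 0 = 0"
    and f_disc: "\<And>v. norm v < 1 \<Longrightarrow> f v = polylog_series (Suc m) v"
    and w: "norm w \<le> 1" "w \<noteq> 1"
  shows "slit_primitive f w = polylog_series (Suc (Suc m)) w"
proof -
  let ?L = "slit_primitive f" and ?P = "polylog_series (Suc (Suc m))"
  have "isCont ?L w"
    using slit_primitive_has_field_derivative[OF holf f0 closed_unit_disc_in_slit_plane[OF w]]
    by (rule DERIV_isCont)
  then have "continuous (at w within ball 0 1) ?L"
    by (rule continuous_at_imp_continuous_at_within)
  moreover have "continuous (at w within ball 0 1) ?P"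
    using continuous_on_polylog_series[of m] w
    by (intro continuous_within_subset[OF _ ball_subset_cball])
      (simp add: continuous_on_eq_continuous_within)
  moreover have "?L v = ?P v" if "v \<in> ball 0 1" for v
    using slit_primitive_eq_polylog_series_disc[OF holf f0 f_disc] that by simp
  ultimately show ?thesis
    using eq_at_closure_point[of "ball 0 1" ?L ?P w] w by simp
qed

definition Li2 :: "complex \<Rightarrow> complex" where
  "Li2 = slit_primitive (\<lambda>w. - Ln (1 - w))"

definition Li3 :: "complex \<Rightarrow> complex" where
  "Li3 = slit_primitive Li2"

lemma holomorphic_minus_Ln_one_minus: "(\<lambda>w. - Ln (1 - w)) holomorphic_on slit_plane"
  by (intro holomorphic_intros) (auto dest: one_minus_slit_plane_notin_nonpos_Reals)

lemma Li2_has_field_derivative: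
  "w \<in> slit_plane \<Longrightarrow> w \<noteq> 0 \<Longrightarrow> (Li2 has_field_derivative - Ln (1 - w) / w) (at w)"
  using slit_primitive_has_field_derivative[OF holomorphic_minus_Ln_one_minus _, of w]
  by (simp add: Li2_def)

lemma Li2_0: "Li2 0 = 0"
  using slit_primitive_0[OF holomorphic_minus_Ln_one_minus] by (simp add: Li2_def)

lemma Li2_eq_polylog_series:
  assumes "norm w \<le> 1" "w \<noteq> 1"
  shows "Li2 w = polylog_series 2 w"
  unfolding Li2_def numeral_2_eq_2
  by (rule slit_primitive_eq_polylog_series[OF holomorphic_minus_Ln_one_minus])
    (use assms polylog_series_1 in auto)

lemma holomorphic_Li2: "Li2 holomorphic_on slit_plane"
  using slit_primitive_has_field_derivative[OF holomorphic_minus_Ln_one_minus]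
  by (auto simp: Li2_def holomorphic_on_open[OF open_slit_plane])

lemma Li3_has_field_derivative:
  "w \<in> slit_plane \<Longrightarrow> w \<noteq> 0 \<Longrightarrow> (Li3 has_field_derivative Li2 w / w) (at w)"
  using slit_primitive_has_field_derivative[OF holomorphic_Li2 Li2_0, of w] by (simp add: Li3_def)

lemma Li3_eq_polylog_series:
  assumes "norm w \<le> 1" "w \<noteq> 1"
  shows "Li3 w = polylog_series 3 w"
proof -
  have "Li2 v = polylog_series (Suc (Suc 0)) v" if "norm v < 1" for v
    using Li2_eq_polylog_series[of v] that by (cases "v = 1") (auto simp: numeral_2_eq_2)
  then show ?thesis
    unfolding Li3_def numeral_3_eq_3
    by (rule slit_primitive_eq_polylog_series[OF holomorphic_Li2 Li2_0 _ assms])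
qed

section \<open>Clausen functions\<close>

lemma of_nat_power_eq_of_real: "(of_nat k ^ m :: complex) = of_real (real k ^ m)"
  by simp

lemma Cl2_eq_Im_polylog_series: "Cl2 t = Im (polylog_series 2 (cis t))"
  unfolding polylog_series_def Cl2_def
  by (subst Im_suminf[OF summable_polylog_series])
    (simp_all only: of_nat_power_eq_of_real Complex.DeMoivre Im_divide_of_real cis.sel norm_cis order_refl
      le_numeral_extra)

lemma Cl3_eq_Re_polylog_series: "Cl3 t = Re (polylog_series 3 (cis t))"
  unfolding polylog_series_def Cl3_def
  by (subst Re_suminf[OF summable_polylog_series])
    (simp_all only: of_nat_power_eq_of_real Complex.DeMoivre Re_divide_of_real cis.sel norm_cis order_refl
      le_numeral_extra)

lemma continuous_on_Cl2: "continuous_on UNIV Cl2"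
proof -
  have "continuous_on UNIV (\<lambda>t. Im (polylog_series (Suc (Suc 0)) (cis t)))"
    by (intro continuous_intros continuous_on_compose2[OF continuous_on_polylog_series]) auto
  then show ?thesis by (simp add: Cl2_eq_Im_polylog_series[abs_def] numeral_2_eq_2)
qed

lemma continuous_on_Cl3: "continuous_on UNIV Cl3"
proof -
  have "continuous_on UNIV (\<lambda>t. Re (polylog_series (Suc (Suc 1)) (cis t)))"
    by (intro continuous_intros continuous_on_compose2[OF continuous_on_polylog_series]) auto
  then show ?thesis by (simp add: Cl3_eq_Re_polylog_series[abs_def] numeral_3_eq_3)
qed

lemma Cl2_0: "Cl2 0 = 0"
  by (simp add: Cl2_def)

lemma Cl3_0: "Cl3 0 = zeta 3"
  by (simp add: Cl3_def zeta_def)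

lemma Cl2_minus: "Cl2 (- t) = - Cl2 t"
proof -
  have "summable (\<lambda>k. sin (real (Suc k) * t) / real (Suc k) ^ 2)"
    by (rule summable_comparison_test'[OF summable_inverse_Suc_square, where N=0])
      (simp add: divide_right_mono del: of_nat_Suc)
  then show ?thesis
    unfolding Cl2_def by (simp add: suminf_minus)
qed

lemma Cl3_minus: "Cl3 (- t) = Cl3 t"
  by (simp add: Cl3_def)

section \<open>The right-hand side\<close>

lemma sin_pi_pos: "0 < x \<Longrightarrow> x < 1 \<Longrightarrow> 0 < sin (pi * x)"
  by (intro sin_gt_zero) auto

lemma norm_one_minus_cis_double: "norm (1 - cis (2 * a)) = 2 * \<bar>sin a\<bar>"
proof -
  have "norm (1 - cis (2 * a)) ^ 2 = (1 - cos (2 * a)) ^ 2 + sin (2 * a) ^ 2"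
    by (simp add: cmod_power2)
  also have "\<dots> = 2 - 2 * cos (2 * a)"
    by (simp add: sin_squared_eq power2_eq_square algebra_simps)
  also have "\<dots> = (2 * \<bar>sin a\<bar>) ^ 2"
    by (simp add: cos_double_sin power_mult_distrib)
  finally show ?thesis
    by (rule power2_eq_imp_eq) auto
qed

lemma cis_double_div_one_minus:
  assumes "sin a \<noteq> 0"
  shows "cis (2 * a) / (1 - cis (2 * a)) = (\<i> * of_real (cot a) - 1) / 2"
proof -
  have "1 - cis (2 * a) \<noteq> 0"
    using norm_one_minus_cis_double[of a] assms by auto
  moreover have "(\<i> * cos a - sin a) * (1 - cis (2 * a)) = cis (2 * a) * (2 * sin a)"
  proof -
    have "cis (2 * a) = Complex (cos a ^ 2 - sin a ^ 2) (2 * sin a * cos a)"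
      by (simp add: complex_eq_iff cos_double sin_double)
    then show ?thesis
      by (simp add: complex_eq_iff) (use sin_cos_squared_add[of a] in algebra)
  qed
  ultimately have "cis (2 * a) / (1 - cis (2 * a)) = (\<i> * cos a - sin a) / (2 * sin a)"
    using assms by (simp add: frac_eq_eq)
  also have "\<dots> = (\<i> * of_real (cot a) - 1) / 2"
    using assms by (simp add: cot_def field_simps)
  finally show ?thesis .
qed

definition exp_2pi_i :: "complex \<Rightarrow> complex" where
  "exp_2pi_i s = exp (2 * of_real pi * \<i> * s)"

lemma exp_2pi_i_of_real: "exp_2pi_i (of_real x) = cis (2 * pi * x)"
  by (simp add: exp_2pi_i_def cis_conv_exp mult_ac)

lemma exp_2pi_i_has_field_derivative:
  "(exp_2pi_i has_field_derivative 2 * of_real pi * \<i> * exp_2pi_i s) (at s)"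
  unfolding exp_2pi_i_def[abs_def] by (auto intro!: derivative_eq_intros)

lemma exp_2pi_i_nonzero: "exp_2pi_i s \<noteq> 0"
  by (simp add: exp_2pi_i_def)

lemma norm_one_minus_exp_2pi_i:
  "0 < x \<Longrightarrow> x < 1 \<Longrightarrow> norm (1 - exp_2pi_i (of_real x)) = 2 * sin (pi * x)"
  using norm_one_minus_cis_double[of "pi * x"] sin_pi_pos[of x]
  by (simp add: exp_2pi_i_of_real mult.assoc)

lemma exp_2pi_i_in_slit_plane: "0 < x \<Longrightarrow> x < 1 \<Longrightarrow> exp_2pi_i (of_real x) \<in> slit_plane"
  using norm_one_minus_exp_2pi_i[of x] sin_pi_pos[of x]
  by (intro closed_unit_disc_in_slit_plane) (auto simp: exp_2pi_i_of_real)

lemma Li_exp_2pi_i_of_real: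
  assumes "0 < x" "x < 1"
  shows "Li2 (exp_2pi_i (of_real x)) = polylog_series 2 (cis (2 * pi * x))"
    and "Li3 (exp_2pi_i (of_real x)) = polylog_series 3 (cis (2 * pi * x))"
proof -
  have "cis (2 * pi * x) \<noteq> 1"
    using norm_one_minus_exp_2pi_i[OF assms] sin_pi_pos[OF assms] by (auto simp: exp_2pi_i_of_real)
  then show "Li2 (exp_2pi_i (of_real x)) = polylog_series 2 (cis (2 * pi * x))"
    and "Li3 (exp_2pi_i (of_real x)) = polylog_series 3 (cis (2 * pi * x))"
    by (simp_all add: exp_2pi_i_of_real Li2_eq_polylog_series Li3_eq_polylog_series)
qed

definition clausen_side :: "real \<Rightarrow> real" where
  "clausen_side x = x\<^sup>2 / 2 - zeta 3 / (2 * pi\<^sup>2) + Cl3 (2 * pi * x) / (2 * pi\<^sup>2)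
     + x * Cl2 (2 * pi * x) / (2 * pi)"

definition clausen_side' :: "real \<Rightarrow> real" where
  "clausen_side' x = x - Cl2 (2 * pi * x) / (2 * pi) - x * ln (2 * sin (pi * x))"

lemma clausen_side_minus: "clausen_side (- x) = clausen_side x"
  by (simp add: clausen_side_def Cl2_minus Cl3_minus)

lemma continuous_on_clausen_side: "continuous_on UNIV clausen_side"
proof -
  have "continuous_on UNIV (\<lambda>x. Cl2 (2 * pi * x))" "continuous_on UNIV (\<lambda>x. Cl3 (2 * pi * x))"
    by (auto intro!: continuous_on_compose2[OF continuous_on_Cl2] continuous_on_compose2[OF continuous_on_Cl3]
        continuous_intros)
  then show ?thesis
    unfolding clausen_side_def[abs_def] by (intro continuous_intros) auto
qed

lemma clausen_side_0: "clausen_side 0 = 0"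
  by (simp add: clausen_side_def Cl3_0)

lemma clausen_side'_tendsto_0: "(clausen_side' \<longlongrightarrow> 0) (at_right 0)"
proof -
  have "((\<lambda>x::real. x * ln (2 * sin (pi * x))) \<longlongrightarrow> 0) (at_right 0)"
    by real_asymp
  moreover have "((\<lambda>x. Cl2 (2 * pi * x)) \<longlongrightarrow> Cl2 (2 * pi * 0)) (at_right 0)"
    using continuous_on_Cl2 by (intro tendsto_intros isCont_tendsto_compose[of _ Cl2])
      (auto simp: continuous_on_eq_continuous_at)
  ultimately have "((\<lambda>x. x - Cl2 (2 * pi * x) / (2 * pi) - x * ln (2 * sin (pi * x))) \<longlongrightarrow>
      0 - Cl2 0 / (2 * pi) - 0) (at_right 0)"
    by (intro tendsto_intros) auto
  then show ?thesis
    by (simp add: clausen_side'_def[abs_def] Cl2_0)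
qed

(*
  Differentiating this holomorphic lift of clausen_side avoids differentiating Cl2 termwise,
  which fails: sum_k cos(k t)/k does not converge uniformly.
*)
definition clausen_lift :: "complex \<Rightarrow> complex" where
  "clausen_lift s = s\<^sup>2 / 2 - of_real (zeta 3 / (2 * pi\<^sup>2))
     + Li3 (exp_2pi_i s) / of_real (2 * pi\<^sup>2) - \<i> * s * Li2 (exp_2pi_i s) / of_real (2 * pi)"

definition clausen_lift' :: "complex \<Rightarrow> complex" where
  "clausen_lift' s = s + \<i> * Li2 (exp_2pi_i s) / of_real (2 * pi) - s * Ln (1 - exp_2pi_i s)"

definition clausen_lift'' :: "complex \<Rightarrow> complex" where
  "clausen_lift'' s = 1 + 2 * of_real pi * \<i> * s * exp_2pi_i s / (1 - exp_2pi_i s)"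

lemma clausen_lift_has_field_derivative:
  assumes "exp_2pi_i s \<in> slit_plane"
  shows "(clausen_lift has_field_derivative clausen_lift' s) (at s)"
proof -
  note chain = DERIV_chain2[OF _ exp_2pi_i_has_field_derivative]
  have "((\<lambda>s. Li3 (exp_2pi_i s)) has_field_derivative
          Li2 (exp_2pi_i s) / exp_2pi_i s * (2 * of_real pi * \<i> * exp_2pi_i s)) (at s)"
    by (rule chain[OF Li3_has_field_derivative[OF assms exp_2pi_i_nonzero]])
  moreover have "((\<lambda>s. Li2 (exp_2pi_i s)) has_field_derivative
          - Ln (1 - exp_2pi_i s) / exp_2pi_i s * (2 * of_real pi * \<i> * exp_2pi_i s)) (at s)"
    by (rule chain[OF Li2_has_field_derivative[OF assms exp_2pi_i_nonzero]])
  ultimately show ?thesis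
    unfolding clausen_lift_def[abs_def] clausen_lift'_def
    using exp_2pi_i_nonzero[of s]
    by (auto intro!: derivative_eq_intros simp: field_simps power2_eq_square)
qed

lemma clausen_lift'_has_field_derivative:
  assumes "exp_2pi_i s \<in> slit_plane"
  shows "(clausen_lift' has_field_derivative clausen_lift'' s) (at s)"
proof -
  have nonpos: "1 - exp_2pi_i s \<notin> \<real>\<^sub>\<le>\<^sub>0"
    using assms by (rule one_minus_slit_plane_notin_nonpos_Reals)
  then have "1 - exp_2pi_i s \<noteq> 0" by auto
  have Li2': "((\<lambda>s. Li2 (exp_2pi_i s)) has_field_derivative
          - Ln (1 - exp_2pi_i s) / exp_2pi_i s * (2 * of_real pi * \<i> * exp_2pi_i s)) (at s)"
    by (rule DERIV_chain2[OF Li2_has_field_derivative[OF assms exp_2pi_i_nonzero]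
          exp_2pi_i_has_field_derivative])
  have Ln': "((\<lambda>s. Ln (1 - exp_2pi_i s)) has_field_derivative
          inverse (1 - exp_2pi_i s) * (0 - 2 * of_real pi * \<i> * exp_2pi_i s)) (at s)"
    by (rule DERIV_chain2[where g="\<lambda>s. 1 - exp_2pi_i s", OF has_field_derivative_Ln[OF nonpos]])
      (intro DERIV_diff DERIV_const exp_2pi_i_has_field_derivative)
  have "(clausen_lift' has_field_derivative
          1 + \<i> * (- Ln (1 - exp_2pi_i s) / exp_2pi_i s * (2 * of_real pi * \<i> * exp_2pi_i s))
            / of_real (2 * pi)
          - (1 * Ln (1 - exp_2pi_i s)
             + inverse (1 - exp_2pi_i s) * (0 - 2 * of_real pi * \<i> * exp_2pi_i s) * s)) (at s)"
    unfolding clausen_lift'_def[abs_def]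
    by (intro DERIV_diff DERIV_add DERIV_cdivide DERIV_cmult DERIV_mult DERIV_ident Li2' Ln')
  then show ?thesis
    by (rule DERIV_cong)
      (use exp_2pi_i_nonzero[of s] \<open>1 - exp_2pi_i s \<noteq> 0\<close> in
        \<open>simp add: clausen_lift''_def field_simps\<close>)
qed

lemma Re_clausen_lift:
  assumes "0 < x" "x < 1"
  shows "Re (clausen_lift (of_real x)) = clausen_side x"
  unfolding clausen_lift_def clausen_side_def Li_exp_2pi_i_of_real[OF assms]
    Cl2_eq_Im_polylog_series Cl3_eq_Re_polylog_series
  by (simp add: power2_eq_square)

lemma Re_clausen_lift':
  assumes "0 < x" "x < 1"
  shows "Re (clausen_lift' (of_real x)) = clausen_side' x"
proof -
  have "1 - exp_2pi_i (of_real x) \<noteq> 0"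
    using norm_one_minus_exp_2pi_i[OF assms] sin_pi_pos[OF assms] by auto
  then show ?thesis
    unfolding clausen_lift'_def clausen_side'_def Li_exp_2pi_i_of_real[OF assms]
      Cl2_eq_Im_polylog_series
    by (simp add: norm_one_minus_exp_2pi_i[OF assms])
qed

lemma Re_clausen_lift'':
  assumes "0 < x" "x < 1"
  shows "Re (clausen_lift'' (of_real x)) = 1 - pi * x * cot (pi * x)"
proof -
  have "exp_2pi_i (of_real x) / (1 - exp_2pi_i (of_real x)) = (\<i> * of_real (cot (pi * x)) - 1) / 2"
    using cis_double_div_one_minus[of "pi * x"] sin_pi_pos[OF assms]
    by (simp add: exp_2pi_i_of_real mult.assoc)
  then have "clausen_lift'' (of_real x)
      = 1 + 2 * of_real pi * \<i> * of_real x * ((\<i> * of_real (cot (pi * x)) - 1) / 2)"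
    unfolding clausen_lift''_def by (metis times_divide_eq_right)
  then show ?thesis by simp
qed

lemma clausen_side_has_real_derivative:
  assumes "0 < x" "x < 1"
  shows "(clausen_side has_real_derivative clausen_side' x) (at x)"
proof -
  have "((\<lambda>x. Re (clausen_lift (of_real x))) has_real_derivative clausen_side' x) (at x)"
    using has_real_derivative_Re_of_real[OF
        clausen_lift_has_field_derivative[OF exp_2pi_i_in_slit_plane[OF assms]]]
    by (simp add: Re_clausen_lift'[OF assms])
  then show ?thesis
    by (rule has_field_derivative_transform_within_open[where S="{0<..<1}"])
      (use assms Re_clausen_lift in auto)
qed

lemma clausen_side'_has_real_derivative:
  assumes "0 < x" "x < 1"
  shows "(clausen_side' has_real_derivative 1 - pi * x * cot (pi * x)) (at x)"
proof -
  have "((\<lambda>x. Re (clausen_lift' (of_real x))) has_real_derivative 1 - pi * x * cot (pi * x)) (at x)"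
    using has_real_derivative_Re_of_real[OF
        clausen_lift'_has_field_derivative[OF exp_2pi_i_in_slit_plane[OF assms]]]
    by (simp only: Re_clausen_lift''[OF assms])
  then show ?thesis
    by (rule has_field_derivative_transform_within_open[where S="{0<..<1}"])
      (use assms Re_clausen_lift' in auto)
qed

section \<open>The left-hand side\<close>

lemma zeta_of_nat: "zeta (real m) = (\<Sum>n. 1 / real (Suc n) ^ m)"
  unfolding zeta_def by (simp only: powr_realpow of_nat_0_less_iff zero_less_Suc)

lemma summable_inverse_Suc_power: "2 \<le> m \<Longrightarrow> summable (\<lambda>n. 1 / real (Suc n) ^ m)"
  by (rule summable_comparison_test'[OF summable_inverse_Suc_square, where N=0])
    (simp add: inverse_Suc_power_le_square del: of_nat_Suc)

lemma zeta_of_nat_bounds: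
  assumes "2 \<le> m"
  shows "0 \<le> zeta (real m)" "zeta (real m) \<le> zeta 2"
proof -
  show "0 \<le> zeta (real m)"
    unfolding zeta_of_nat by (intro suminf_nonneg summable_inverse_Suc_power assms) simp
  have "(\<Sum>n. 1 / real (Suc n) ^ m) \<le> (\<Sum>n. 1 / real (Suc n) ^ 2)"
    using assms by (intro suminf_le summable_inverse_Suc_power inverse_Suc_power_le_square) auto
  then show "zeta (real m) \<le> zeta 2"
    using zeta_of_nat[of 2] zeta_of_nat[of m] by simp
qed

lemma zeta_even_bounds: "0 \<le> zeta (2 * real (Suc k))" "zeta (2 * real (Suc k)) \<le> zeta 2"
proof -
  have "2 * real (Suc k) = real (2 * Suc k)" by simp
  then show "0 \<le> zeta (2 * real (Suc k))" "zeta (2 * real (Suc k)) \<le> zeta 2"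
    using zeta_of_nat_bounds[of "2 * Suc k"] by (simp_all only:) simp_all
qed

definition zeta_term :: "nat \<Rightarrow> real \<Rightarrow> real" where
  "zeta_term k z = zeta (2 * real (Suc k)) * z ^ (2 * Suc k)
     / ((real (Suc k) + 1) * (2 * real (Suc k) + 1))"

(* zeta_side = F and clausen_side = G: x^2 times the two sides of the identity. *)
definition zeta_side :: "real \<Rightarrow> real" where
  "zeta_side x = (\<Sum>k. x\<^sup>2 * zeta_term k x)"

definition zeta_side' :: "real \<Rightarrow> real" where
  "zeta_side' x = (\<Sum>k. 2 * zeta (2 * real (Suc k)) * x ^ (2 * k + 3) / (2 * real k + 3))"

definition zeta_side'' :: "real \<Rightarrow> real" where
  "zeta_side'' x = (\<Sum>k. 2 * zeta (2 * real (Suc k)) * x ^ (2 * k + 2))"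

lemma zeta_term_minus: "zeta_term k (- z) = zeta_term k z"
  by (simp add: zeta_term_def)

lemma zeta_side_minus: "zeta_side (- x) = zeta_side x"
  by (simp add: zeta_side_def zeta_term_minus)

lemma abs_zeta_term_le:
  assumes "\<bar>z\<bar> \<le> 1"
  shows "\<bar>zeta_term k z\<bar> \<le> zeta 2 / real (Suc k) ^ 2"
proof -
  have "zeta (2 * real (Suc k)) * \<bar>z\<bar> ^ (2 * Suc k) \<le> zeta 2 * 1"
    using zeta_even_bounds[of k] assms by (intro mult_mono power_le_one) auto
  moreover have "real (Suc k) ^ 2 \<le> (real (Suc k) + 1) * (2 * real (Suc k) + 1)"
    unfolding power2_eq_square by (intro mult_mono) auto
  ultimately have "zeta (2 * real (Suc k)) * \<bar>z\<bar> ^ (2 * Suc k)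
      / ((real (Suc k) + 1) * (2 * real (Suc k) + 1)) \<le> zeta 2 / real (Suc k) ^ 2"
    using zeta_even_bounds[of k] by (intro frac_le) (auto simp del: of_nat_Suc)
  then show ?thesis
    using zeta_even_bounds(1)[of k] by (simp add: zeta_term_def abs_mult power_abs)
qed

lemma summable_zeta_term:
  assumes "\<bar>z\<bar> \<le> 1"
  shows "summable (\<lambda>k. zeta_term k z)"
proof (rule summable_comparison_test'[where N=0])
  show "summable (\<lambda>k. zeta 2 * (1 / real (Suc k) ^ 2))"
    by (rule summable_mult[OF summable_inverse_Suc_square])
  show "norm (zeta_term k z) \<le> zeta 2 * (1 / real (Suc k) ^ 2)" for k
    using abs_zeta_term_le[OF assms, of k] by simp
qed

lemma continuous_on_zeta_side: "continuous_on {-1..1} zeta_side"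
  unfolding zeta_side_def[abs_def]
proof (rule continuous_on_suminf_Weierstrass)
  show "summable (\<lambda>k. zeta 2 / real (Suc k) ^ 2)"
    using summable_mult[OF summable_inverse_Suc_square, of "zeta 2"] by simp
  show "norm (x\<^sup>2 * zeta_term k x) \<le> zeta 2 / real (Suc k) ^ 2" if "x \<in> {-1..1}" for k x
  proof -
    have "\<bar>x\<bar> \<le> 1" using that by auto
    then have "x\<^sup>2 * \<bar>zeta_term k x\<bar> \<le> 1 * (zeta 2 / real (Suc k) ^ 2)"
      using abs_zeta_term_le[of x k] by (intro mult_mono) (auto simp: abs_square_le_1)
    then show ?thesis by (simp add: abs_mult)
  qed
qed (auto simp: zeta_term_def intro!: continuous_intros)

lemma zeta_side_has_real_derivative:
  assumes "\<bar>x\<bar> < 1"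
  shows "(zeta_side has_real_derivative zeta_side' x) (at x)"
  unfolding zeta_side_def[abs_def] zeta_side'_def
proof (rule has_real_derivative_series_unit_interval[OF assms, where B="2 * zeta 2"])
  fix k and y :: real
  let ?c = "zeta (2 * real (Suc k))"
  let ?a = "?c / ((real k + 2) * (2 * real k + 3))"
  have "real k + 2 \<noteq> 0" by linarith
  have fun_eq: "(\<lambda>v. v\<^sup>2 * zeta_term k v) = (\<lambda>v. ?a * v ^ Suc (2 * k + 3))"
  proof
    fix v :: real
    have "Suc (2 * k + 3) = 2 + 2 * Suc k" by simp
    then show "v\<^sup>2 * zeta_term k v = ?a * v ^ Suc (2 * k + 3)"
      by (simp only: power_add) (simp add: zeta_term_def field_simps)
  qed
  have "?a * real (Suc (2 * k + 3)) = (2 * ?c * (real k + 2)) / ((2 * real k + 3) * (real k + 2))"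
    by (simp add: algebra_simps)
  also have "\<dots> = 2 * ?c / (2 * real k + 3)"
    using \<open>real k + 2 \<noteq> 0\<close> by (rule mult_divide_mult_cancel_right)
  finally have const_eq: "?a * real (Suc (2 * k + 3)) = 2 * ?c / (2 * real k + 3)" .
  from has_real_derivative_monomial[of ?a "2 * k + 3" y]
  show "((\<lambda>y. y\<^sup>2 * zeta_term k y) has_real_derivative
      2 * ?c * y ^ (2 * k + 3) / (2 * real k + 3)) (at y)"
    unfolding fun_eq const_eq by simp
next
  fix k and y :: real
  assume "\<bar>y\<bar> < 1"
  then have "\<bar>y\<bar> ^ (2 * k + 3) \<le> \<bar>y\<bar> ^ k"
    by (intro power_decreasing) auto
  then have "zeta (2 * real (Suc k)) * \<bar>y\<bar> ^ (2 * k + 3) \<le> zeta 2 * \<bar>y\<bar> ^ k"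
    using zeta_even_bounds[of k] by (intro mult_mono) auto
  moreover have "0 \<le> zeta (2 * real (Suc k)) * \<bar>y\<bar> ^ (2 * k + 3)"
    using zeta_even_bounds(1)[of k] by simp
  then have "zeta (2 * real (Suc k)) * \<bar>y\<bar> ^ (2 * k + 3) / (2 * real k + 3)
             \<le> zeta (2 * real (Suc k)) * \<bar>y\<bar> ^ (2 * k + 3)"
    by (simp add: divide_le_eq mult_le_cancel_left1)
  ultimately show "\<bar>2 * zeta (2 * real (Suc k)) * y ^ (2 * k + 3) / (2 * real k + 3)\<bar>
                   \<le> 2 * zeta 2 * \<bar>y\<bar> ^ k"
    using zeta_even_bounds(1)[of k] by (simp add: abs_mult power_abs)
qed (simp add: zeta_term_def)

lemma zeta_side'_has_real_derivative:
  assumes "\<bar>x\<bar> < 1"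
  shows "(zeta_side' has_real_derivative zeta_side'' x) (at x)"
  unfolding zeta_side'_def[abs_def] zeta_side''_def
proof (rule has_real_derivative_series_unit_interval[OF assms, where B="2 * zeta 2"])
  fix k and y :: real
  let ?c = "zeta (2 * real (Suc k))"
  let ?a = "2 * ?c / (2 * real k + 3)"
  have "2 * real k + 3 \<noteq> 0" by linarith
  have fun_eq: "(\<lambda>v. 2 * ?c * v ^ (2 * k + 3) / (2 * real k + 3)) = (\<lambda>v. ?a * v ^ Suc (2 * k + 2))"
  proof
    fix v :: real
    have "Suc (2 * k + 2) = 2 * k + 3" by simp
    then show "2 * ?c * v ^ (2 * k + 3) / (2 * real k + 3) = ?a * v ^ Suc (2 * k + 2)"
      by (simp only:) simp
  qed
  have const_eq: "?a * real (Suc (2 * k + 2)) = 2 * ?c"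
    using \<open>2 * real k + 3 \<noteq> 0\<close> by (simp add: field_simps)
  from has_real_derivative_monomial[of ?a "2 * k + 2" y]
  show "((\<lambda>y. 2 * ?c * y ^ (2 * k + 3) / (2 * real k + 3)) has_real_derivative
      2 * ?c * y ^ (2 * k + 2)) (at y)"
    unfolding fun_eq const_eq .
next
  fix k and y :: real
  assume "\<bar>y\<bar> < 1"
  then have "\<bar>y\<bar> ^ (2 * k + 2) \<le> \<bar>y\<bar> ^ k"
    by (intro power_decreasing) auto
  then show "\<bar>2 * zeta (2 * real (Suc k)) * y ^ (2 * k + 2)\<bar> \<le> 2 * zeta 2 * \<bar>y\<bar> ^ k"
    using zeta_even_bounds[of k] by (simp add: abs_mult power_abs mult_mono)
qed simp

lemma Suc_square_minus_square_pos:
  fixes x :: real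
  assumes "x\<^sup>2 < 1"
  shows "0 < real (Suc n) ^ 2 - x\<^sup>2"
proof -
  have "0 < (1 - x\<^sup>2) * real (Suc n) ^ 2"
    using assms by (simp del: of_nat_Suc)
  also have "\<dots> \<le> real (Suc n) ^ 2 - x\<^sup>2"
    by (rule Suc_square_minus_square_lower_bound) simp
  finally show ?thesis .
qed

lemma summable_square_div_Suc_square_minus_square:
  fixes x :: real
  assumes "x\<^sup>2 < 1"
  shows "summable (\<lambda>n. x\<^sup>2 / (real (Suc n) ^ 2 - x\<^sup>2))"
proof (rule summable_comparison_test'[where N=0])
  show "summable (\<lambda>n. x\<^sup>2 / (1 - x\<^sup>2) * (1 / real (Suc n) ^ 2))"
    by (rule summable_mult[OF summable_inverse_Suc_square])
  show "norm (x\<^sup>2 / (real (Suc n) ^ 2 - x\<^sup>2)) \<le> x\<^sup>2 / (1 - x\<^sup>2) * (1 / real (Suc n) ^ 2)" for n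
  proof -
    have "x\<^sup>2 / (real (Suc n) ^ 2 - x\<^sup>2) \<le> x\<^sup>2 / ((1 - x\<^sup>2) * real (Suc n) ^ 2)"
      using assms Suc_square_minus_square_pos[OF assms, of n]
      by (intro divide_left_mono Suc_square_minus_square_lower_bound mult_pos_pos) auto
    then show ?thesis
      using Suc_square_minus_square_pos[OF assms, of n] by simp
  qed
qed

lemma sums_zeta_even_powers:
  fixes x :: real
  assumes "\<bar>x\<bar> < 1"
  shows "(\<lambda>k. zeta (2 * real (Suc k)) * x ^ (2 * Suc k)) sums (\<Sum>n. x\<^sup>2 / (real (Suc n) ^ 2 - x\<^sup>2))"
proof (rule sums_swap_nonneg)
  define q where "q n = x\<^sup>2 / real (Suc n) ^ 2" for n
  have x2: "x\<^sup>2 < 1" using assms by (simp add: abs_square_less_1)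
  show "0 \<le> q n ^ Suc k" for n k by (simp add: q_def)
  show "(\<lambda>k. q n ^ Suc k) sums (x\<^sup>2 / (real (Suc n) ^ 2 - x\<^sup>2))" for n
  proof -
    have "q n < 1"
      using x2 by (simp add: q_def divide_less_eq power_le_one order.strict_trans2
          del: of_nat_Suc)
    then have "(\<lambda>k. q n * q n ^ k) sums (q n * (1 / (1 - q n)))"
      by (intro sums_mult geometric_sums) (simp add: q_def)
    moreover have "q n * (1 / (1 - q n)) = x\<^sup>2 / (real (Suc n) ^ 2 - x\<^sup>2)"
      using Suc_square_minus_square_pos[OF x2, of n]
      by (simp add: q_def field_simps del: of_nat_Suc)
    ultimately show ?thesis by simp
  qed
  show "(\<lambda>n. q n ^ Suc k) sums (zeta (2 * real (Suc k)) * x ^ (2 * Suc k))" for k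
  proof -
    have "2 * real (Suc k) = real (2 * Suc k)" by simp
    then have "(\<lambda>n. 1 / real (Suc n) ^ (2 * Suc k)) sums zeta (2 * real (Suc k))"
      by (simp only: zeta_of_nat) (intro summable_sums summable_inverse_Suc_power, simp)
    then have "(\<lambda>n. x ^ (2 * Suc k) * (1 / real (Suc n) ^ (2 * Suc k))) sums
               (x ^ (2 * Suc k) * zeta (2 * real (Suc k)))"
      by (rule sums_mult)
    moreover have "q n ^ Suc k = x ^ (2 * Suc k) * (1 / real (Suc n) ^ (2 * Suc k))" for n
      unfolding q_def power_divide power_mult by simp
    ultimately show ?thesis by (simp only: mult.commute)
  qed
  show "summable (\<lambda>n. x\<^sup>2 / (real (Suc n) ^ 2 - x\<^sup>2))"
    using x2 by (rule summable_square_div_Suc_square_minus_square)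
qed

lemma sums_ln_sin_product:
  assumes "0 < y" "y < 1"
  shows "(\<lambda>n. ln (1 - y\<^sup>2 / real (Suc n) ^ 2)) sums (ln (sin (pi * y)) - ln (pi * y))"
proof -
  have pos: "0 < 1 - y\<^sup>2 / real (Suc n) ^ 2" for n
  proof -
    have "y\<^sup>2 / real (Suc n) ^ 2 \<le> y\<^sup>2"
      by (simp add: divide_le_eq mult_le_cancel_left1 del: of_nat_Suc)
    moreover have "y\<^sup>2 < 1" using assms by (simp add: abs_square_less_1)
    ultimately show ?thesis by linarith
  qed
  have "(\<lambda>n. \<Prod>k<n. 1 - y\<^sup>2 / real (Suc k) ^ 2) \<longlonglongrightarrow> sin (pi * y) / (pi * y)"
    using sin_product_formula_real'[of y] assms by (simp add: prod.atLeast1_atMost_eq del: of_nat_Suc)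
  then have "(\<lambda>n. ln (\<Prod>k<n. 1 - y\<^sup>2 / real (Suc k) ^ 2)) \<longlonglongrightarrow> ln (sin (pi * y) / (pi * y))"
    using sin_pi_pos[OF assms] assms by (intro tendsto_ln) auto
  moreover have "ln (\<Prod>k<n. 1 - y\<^sup>2 / real (Suc k) ^ 2) = (\<Sum>k<n. ln (1 - y\<^sup>2 / real (Suc k) ^ 2))" for n
    using pos by (intro ln_prod) (simp_all add: less_imp_neq[symmetric] del: of_nat_Suc)
  moreover have "ln (sin (pi * y) / (pi * y)) = ln (sin (pi * y)) - ln (pi * y)"
    using sin_pi_pos[OF assms] assms by (simp add: ln_div)
  ultimately show ?thesis by (simp add: sums_def)
qed

lemma abs_two_mult_div_Suc_square_minus_square_le:
  fixes y r :: real
  assumes "0 < y" "y < r" "r < 1"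
  shows "\<bar>- 2 * y / (real (Suc n) ^ 2 - y\<^sup>2)\<bar> \<le> 2 / (1 - r\<^sup>2) * (1 / real (Suc n) ^ 2)"
proof -
  have gap: "(1 - r\<^sup>2) * real (Suc n) ^ 2 \<le> real (Suc n) ^ 2 - y\<^sup>2"
    using assms by (intro Suc_square_minus_square_lower_bound power_mono) auto
  have gap_pos: "0 < (1 - r\<^sup>2) * real (Suc n) ^ 2"
    using assms by (simp add: abs_square_less_1 del: of_nat_Suc)
  have "\<bar>- 2 * y / (real (Suc n) ^ 2 - y\<^sup>2)\<bar> = 2 * y / (real (Suc n) ^ 2 - y\<^sup>2)"
    using assms gap gap_pos by (simp add: abs_divide)
  also have "\<dots> \<le> 2 / ((1 - r\<^sup>2) * real (Suc n) ^ 2)"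
    using assms gap gap_pos by (intro frac_le) auto
  finally show ?thesis by simp
qed

lemma sums_log_derivative_sin_product:
  assumes x: "0 < x" "x < 1"
  shows "(\<lambda>n. - 2 * x / (real (Suc n) ^ 2 - x\<^sup>2)) sums (pi * cot (pi * x) - 1 / x)"
proof -
  define f where "f n y = ln (1 - y\<^sup>2 / real (Suc n) ^ 2)" for n y
  define f' where "f' n y = - 2 * y / (real (Suc n) ^ 2 - y\<^sup>2)" for n y
  define r where "r = (1 + x) / 2"
  have r: "x < r" "r < 1" using x by (auto simp: r_def)
  have f': "(f n has_real_derivative f' n y) (at y)" if "y \<in> {0<..<r}" for n y
    unfolding f_def[abs_def] f'_def
  proof (rule has_real_derivative_ln_one_minus_square_div)
    have "y\<^sup>2 < 1" using that r by (simp add: abs_square_less_1)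
    from Suc_square_minus_square_pos[OF this, of n] show "y\<^sup>2 < real (Suc n) ^ 2" by simp
  qed
  have bound: "norm (f' n y) \<le> 2 / (1 - r\<^sup>2) * (1 / real (Suc n) ^ 2)" if "y \<in> {0<..<r}" for n y
    using abs_two_mult_div_Suc_square_minus_square_le[of y r n] that r by (simp add: f'_def)
  have summable_bound: "summable (\<lambda>n. 2 / (1 - r\<^sup>2) * (1 / real (Suc n) ^ 2))"
    by (rule summable_mult[OF summable_inverse_Suc_square])
  have "x \<in> {0<..<r}" using r x by auto
  then have "((\<lambda>y. \<Sum>n. f n y) has_real_derivative (\<Sum>n. f' n x)) (at x)"
    using has_field_derivative_series_Weierstrass[where S="{0<..<r}" and a=x,
        OF _ _ _ f' bound summable_bound]
      sums_ln_sin_product[OF x] by (auto simp: f_def[abs_def] sums_iff)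
  then have "((\<lambda>y. ln (sin (pi * y)) - ln (pi * y)) has_real_derivative (\<Sum>n. f' n x)) (at x)"
    by (rule has_field_derivative_transform_within_open[where S="{0<..<r}"])
      (use \<open>x \<in> {0<..<r}\<close> r sums_ln_sin_product in \<open>auto simp: f_def[abs_def] sums_iff\<close>)
  moreover have "((\<lambda>y. ln (sin (pi * y)) - ln (pi * y)) has_real_derivative
                  pi * cot (pi * x) - 1 / x) (at x)"
    using sin_pi_pos[OF x] x by (auto intro!: derivative_eq_intros simp: cot_def field_simps)
  ultimately have "(\<Sum>n. f' n x) = pi * cot (pi * x) - 1 / x"
    by (rule DERIV_unique)
  moreover have "summable (\<lambda>n. f' n x)"
    using bound \<open>x \<in> {0<..<r}\<close>
    by (intro summable_comparison_test'[OF summable_bound, where N=0]) auto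
  ultimately show ?thesis by (simp add: f'_def sums_iff)
qed

lemma cot_partial_fractions:
  assumes "0 < x" "x < 1"
  shows "(\<lambda>n. 2 * x\<^sup>2 / (real (Suc n) ^ 2 - x\<^sup>2)) sums (1 - pi * x * cot (pi * x))"
proof -
  have "(\<lambda>n. - x * (- 2 * x / (real (Suc n) ^ 2 - x\<^sup>2))) sums (- x * (pi * cot (pi * x) - 1 / x))"
    by (rule sums_mult[OF sums_log_derivative_sin_product[OF assms]])
  moreover have "- x * (pi * cot (pi * x) - 1 / x) = 1 - pi * x * cot (pi * x)"
    using assms by (simp add: field_simps)
  ultimately show ?thesis by (simp add: power2_eq_square mult.left_commute)
qed

lemma zeta_side''_eq:
  assumes "0 < x" "x < 1"
  shows "zeta_side'' x = 1 - pi * x * cot (pi * x)"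
proof -
  define h where "h n = x\<^sup>2 / (real (Suc n) ^ 2 - x\<^sup>2)" for n
  have "(\<lambda>n. 2 * h n) sums (1 - pi * x * cot (pi * x))"
    using cot_partial_fractions[OF assms] by (simp add: h_def)
  then have "summable h" "(\<Sum>n. 2 * h n) = 1 - pi * x * cot (pi * x)"
    by (simp_all add: sums_iff summable_cmult_iff)
  then have "2 * (\<Sum>n. h n) = 1 - pi * x * cot (pi * x)"
    by (simp add: suminf_mult)
  moreover have "(\<lambda>k. 2 * (zeta (2 * real (Suc k)) * x ^ (2 * Suc k))) sums (2 * (\<Sum>n. h n))"
    using sums_zeta_even_powers[of x] assms unfolding h_def by (intro sums_mult) auto
  ultimately show ?thesis
    by (simp add: zeta_side''_def sums_iff mult.assoc)
qed

lemma zeta_side_eq_clausen_side: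
  assumes "0 < x" "x \<le> 1"
  shows "zeta_side x = clausen_side x"
proof -
  have derivatives_agree: "zeta_side' y - clausen_side' y = 0" if y: "y \<in> {0<..<1}" for y
  proof (rule has_real_derivative_zero_imp_eq_at_right_limit[OF _ _ y])
    show "((\<lambda>y. zeta_side' y - clausen_side' y) has_real_derivative 0) (at y)"
      if "y \<in> {0<..<1}" for y
      using DERIV_diff[OF zeta_side'_has_real_derivative clausen_side'_has_real_derivative] that
      by (simp add: zeta_side''_eq)
    have "isCont zeta_side' 0"
      using zeta_side'_has_real_derivative[of 0] by (simp add: DERIV_isCont)
    then have "(zeta_side' \<longlongrightarrow> 0) (at_right 0)"
      by (simp add: isCont_def filterlim_at_split zeta_side'_def power_0_left)
    then show "((\<lambda>y. zeta_side' y - clausen_side' y) \<longlongrightarrow> 0) (at_right 0)"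
      using tendsto_diff[OF _ clausen_side'_tendsto_0] by simp
  qed
  have zero_on_open: "zeta_side y - clausen_side y = 0" if y: "y \<in> {0<..<1}" for y
  proof (rule has_real_derivative_zero_imp_eq_at_right_limit[OF _ _ y])
    show "((\<lambda>y. zeta_side y - clausen_side y) has_real_derivative 0) (at y)"
      if "y \<in> {0<..<1}" for y
      using DERIV_diff[OF zeta_side_has_real_derivative clausen_side_has_real_derivative]
        derivatives_agree that by simp
    have "isCont (\<lambda>y. zeta_side y - clausen_side y) 0"
      using zeta_side_has_real_derivative[of 0] continuous_on_clausen_side
      by (intro continuous_intros) (auto simp: DERIV_isCont continuous_on_eq_continuous_at)
    then show "((\<lambda>y. zeta_side y - clausen_side y) \<longlongrightarrow> 0) (at_right 0)"
      by (simp add: isCont_def filterlim_at_split zeta_side_def clausen_side_0)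
  qed
  have "continuous_on (closure {0<..<1}) (\<lambda>y. zeta_side y - clausen_side y)"
    using continuous_on_subset[OF continuous_on_zeta_side, of "{0..1}"] continuous_on_clausen_side
    by (auto intro!: continuous_intros elim: continuous_on_subset)
  from continuous_constant_on_closure[OF this zero_on_open] assms show ?thesis by simp
qed

theorem corollary15:
  fixes z :: real
  assumes "0 < \<bar>z\<bar>" and "\<bar>z\<bar> \<le> 1"
  shows "(\<lambda>k. zeta (2 * real (Suc k)) * z ^ (2 * Suc k)
              / ((real (Suc k) + 1) * (2 * real (Suc k) + 1)))
         sums (1/2 - zeta 3 / (2 * pi^2 * z^2) + Cl3 (2 * pi * z) / (2 * pi^2 * z^2)
               + Cl2 (2 * pi * z) / (2 * pi * z))"
proof -
  have "z \<noteq> 0" using assms by simp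
  have "z\<^sup>2 * (\<Sum>k. zeta_term k z) = zeta_side z"
    unfolding zeta_side_def by (rule suminf_mult[OF summable_zeta_term[OF assms(2)], symmetric])
  also have "\<dots> = clausen_side z"
    using zeta_side_eq_clausen_side[of "\<bar>z\<bar>"] assms
    by (cases "0 \<le> z") (auto simp: zeta_side_minus clausen_side_minus)
  finally have "(\<Sum>k. zeta_term k z) = clausen_side z / z\<^sup>2"
    using \<open>z \<noteq> 0\<close> by (simp add: field_simps)
  also have "\<dots> = 1/2 - zeta 3 / (2 * pi^2 * z^2) + Cl3 (2 * pi * z) / (2 * pi^2 * z^2)
                  + Cl2 (2 * pi * z) / (2 * pi * z)"
    using \<open>z \<noteq> 0\<close> by (simp add: clausen_side_def field_simps power2_eq_square)
  finally show ?thesis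
    using summable_sums[OF summable_zeta_term[OF assms(2)]] by (simp add: zeta_term_def)
qed

end
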